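(* Let $b(1)^2,\dots,b(N)^2$ be i.i.d. with $\mathbb P(b(i)^2\le\tau)=1-e^{-\tau/2}$, let $I$ be an index set of the $|I|$ smallest values of $b(i)^2$, with $1\le|I|<N$, $\sigma=|I|/N$, $\tau_*=-2\ln(1-\sigma)$, $\hat I=\{i:b(i)^2\le\tau_*\}$ and $\|\hat b\|^2=\sum_{i\in\hat I}b(i)^2$. Then for every $\epsilon>0$ and $\delta>0$, $$\frac{\|b_I\|^2}{|I|}\le\frac{\|\hat b\|^2}{|\hat I|}+\epsilon(\tau_*+\delta)$$ with probability at least $$1-2\exp\!\Big(-\tfrac12\delta^2e^{-\delta}(1-\sigma)^2N\Big)-2\exp\!\Big(-2\epsilon^2(1-\sigma)^2\frac{|I|^2}{N}\Big)$$ (with the convention $\|\hat b\|^2/|\hat I|=+\infty$ if $\hat I=\emptyset$).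
   Context: "$I$ is an index set of the $|I|$ smallest values" means $b(i)\le b(j)$ for all $i\in I$, $j\notin I$ (with $b(i)\ge0$); $\|b_I\|^2=\sum_{i\in I}b(i)^2$. *)

theory Defs
  imports "HOL-Probability.Probability"
begin

end

theory Submission
  imports Defs
begin

text \<open>
  Call a sample good if all its values are positive, more than \<open>(1 - \<epsilon>) k\<close> of them are at
  most \<open>\<tau>\<close> and at least \<open>k\<close> of them are at most \<open>\<tau> + \<delta>\<close>. For a good sample the inequality
  holds deterministically: if the sublevel set at \<open>\<tau>\<close> has at least \<open>k\<close> elements, it contains
  the \<open>k\<close> smallest values and therefore has the larger mean; otherwise it is contained in
  them, and the fewer than \<open>\<epsilon> k\<close> remaining smallest values are at most \<open>\<tau> + \<delta>\<close>, which
  adds at most \<open>\<epsilon> (\<tau> + \<delta>)\<close> to the mean. Both counts are sums of independent indicators;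
  at \<open>\<tau> = \<tau>\<^sub>*\<close> their expectations are \<open>k\<close> and \<open>k + (N - k) (1 - exp (-\<delta>/2))\<close>, so
  Hoeffding's inequality bounds the probability that a sample is not good, and the stated
  rate follows from \<open>\<delta> exp (-\<delta>/2) / 2 \<le> 1 - exp (-\<delta>/2)\<close>.
\<close>

lemma mean_le_mean_of_superset:
  fixes f :: "'a \<Rightarrow> real"
  assumes "finite H" and "I \<subseteq> H" and "I \<noteq> {}"
    and below: "\<forall>i\<in>I. \<forall>j\<in>H - I. f i \<le> f j"
  shows "sum f I / card I \<le> sum f H / card H"
proof -
  have "finite I" using assms finite_subset by blast
  have cards: "0 < card I" "card I \<le> card H"
    using \<open>finite I\<close> \<open>I \<noteq> {}\<close> \<open>finite H\<close> \<open>I \<subseteq> H\<close> by (auto intro: card_mono)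
  have "(\<Sum>i\<in>I. \<Sum>j\<in>H - I. f i) \<le> (\<Sum>i\<in>I. \<Sum>j\<in>H - I. f j)"
    using below by (intro sum_mono) auto
  then have "real (card (H - I)) * sum f I \<le> real (card I) * sum f (H - I)"
    by (simp add: sum_distrib_left)
  then have "(real (card H) - real (card I)) * sum f I \<le> real (card I) * (sum f H - sum f I)"
    using cards \<open>finite H\<close> \<open>I \<subseteq> H\<close> \<open>finite I\<close> by (simp add: card_Diff_subset sum_diff)
  then have "sum f I * real (card H) \<le> sum f H * real (card I)"
    by (simp add: algebra_simps)
  then show ?thesis using cards by (simp add: divide_simps)
qed

lemma mean_le_mean_of_subset_plus:
  fixes f :: "'a \<Rightarrow> real"
  assumes "finite I" and "H \<subseteq> I" and "H \<noteq> {}"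
    and nonneg: "\<forall>i\<in>H. 0 \<le> f i" and bound: "\<forall>i\<in>I. f i \<le> b"
  shows "sum f I / card I \<le> sum f H / card H + (1 - card H / card I) * b"
proof -
  have "finite H" using assms finite_subset by blast
  have cards: "0 < card H" "card H \<le> card I"
    using \<open>finite H\<close> \<open>H \<noteq> {}\<close> \<open>finite I\<close> \<open>H \<subseteq> I\<close> by (auto intro: card_mono)
  have "sum f I = sum f H + sum f (I - H)"
    using \<open>finite I\<close> \<open>H \<subseteq> I\<close> by (simp add: sum.subset_diff)
  also have "sum f (I - H) \<le> real (card (I - H)) * b"
    using bound by (intro sum_bounded_above) auto
  also have "real (card (I - H)) = real (card I) - real (card H)"
    using \<open>finite H\<close> \<open>H \<subseteq> I\<close> cards by (simp add: card_Diff_subset)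
  finally have "sum f I / card I \<le> (sum f H + (real (card I) - real (card H)) * b) / card I"
    using cards by (intro divide_right_mono) auto
  also have "\<dots> = sum f H / card I + (1 - card H / card I) * b"
    using cards by (simp add: field_simps)
  also have "sum f H / card I \<le> sum f H / card H"
    using cards nonneg by (intro divide_left_mono sum_nonneg) auto
  finally show ?thesis by simp
qed

lemma smallest_subset_sublevel_set:
  fixes f :: "'a \<Rightarrow> 'b::linorder"
  assumes "finite A" and "I \<subseteq> A" and below: "\<forall>i\<in>I. \<forall>j\<in>A - I. f i \<le> f j"
    and "card I \<le> card {j\<in>A. f j \<le> c}"
  shows "I \<subseteq> {j\<in>A. f j \<le> c}"
proof
  fix i assume "i \<in> I"
  show "i \<in> {j\<in>A. f j \<le> c}"
  proof (rule ccontr)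
    assume "i \<notin> {j\<in>A. f j \<le> c}"
    then have "c < f i" using \<open>i \<in> I\<close> \<open>I \<subseteq> A\<close> by auto
    then have "{j\<in>A. f j \<le> c} \<subseteq> I - {i}"
      using below \<open>i \<in> I\<close> by (auto dest: order.strict_trans1 order.strict_trans2)
    then have "card {j\<in>A. f j \<le> c} \<le> card (I - {i})"
      using \<open>finite A\<close> \<open>I \<subseteq> A\<close> finite_subset by (intro card_mono) auto
    also have "\<dots> < card I"
      using \<open>finite A\<close> \<open>I \<subseteq> A\<close> \<open>i \<in> I\<close> finite_subset by (intro card_Diff1_less) auto
    finally show False using \<open>card I \<le> _\<close> by simp
  qed
qed

lemma sublevel_set_subset_smallest:
  fixes f :: "'a \<Rightarrow> 'b::linorder"
  assumes "finite A" and "I \<subseteq> A" and below: "\<forall>i\<in>I. \<forall>j\<in>A - I. f i \<le> f j"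
    and "card {j\<in>A. f j \<le> c} \<le> card I"
  shows "{j\<in>A. f j \<le> c} \<subseteq> I"
proof
  fix j assume j: "j \<in> {j\<in>A. f j \<le> c}"
  show "j \<in> I"
  proof (rule ccontr)
    assume "j \<notin> I"
    then have "insert j I \<subseteq> {j\<in>A. f j \<le> c}"
      using below j \<open>I \<subseteq> A\<close> by (auto intro: order_trans)
    then have "card (insert j I) \<le> card {j\<in>A. f j \<le> c}"
      using \<open>finite A\<close> by (intro card_mono) auto
    then show False
      using \<open>card {j\<in>A. f j \<le> c} \<le> card I\<close> \<open>j \<notin> I\<close> \<open>finite A\<close> \<open>I \<subseteq> A\<close> finite_subset
      by fastforce
  qed
qed

text \<open>
  The event of the proposition for a sample \<open>f\<close>; the disjunct \<open>Ih = {}\<close> encodes the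
  convention that the mean over an empty set is \<open>+\<infinity>\<close>.
\<close>
definition smallest_mean_bound :: "nat \<Rightarrow> nat \<Rightarrow> real \<Rightarrow> real \<Rightarrow> (nat \<Rightarrow> real) \<Rightarrow> bool" where
  "smallest_mean_bound N k \<tau> e f \<longleftrightarrow>
     (\<forall>I. I \<subseteq> {..<N} \<longrightarrow> card I = k \<longrightarrow>
        (\<forall>i\<in>I. \<forall>j\<in>{..<N} - I. f i \<le> f j) \<longrightarrow>
        (let Ih = {i. i < N \<and> f i \<le> \<tau>}
         in Ih = {} \<or> (\<Sum>i\<in>I. f i) / real k \<le> (\<Sum>i\<in>Ih. f i) / real (card Ih) + e))"

lemma smallest_mean_boundI:
  fixes f :: "nat \<Rightarrow> real"
  assumes nonneg: "\<forall>i<N. 0 \<le> f i" and "1 \<le> k" "0 \<le> \<epsilon>" "0 \<le> \<tau>" "0 \<le> \<delta>"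
    and many_below: "real k - \<epsilon> * real k < card {i. i < N \<and> f i \<le> \<tau>}"
    and enough_below: "k \<le> card {i. i < N \<and> f i \<le> \<tau> + \<delta>}"
  shows "smallest_mean_bound N k \<tau> (\<epsilon> * (\<tau> + \<delta>)) f"
  unfolding smallest_mean_bound_def Let_def
proof (intro allI impI)
  fix I assume I: "I \<subseteq> {..<N}" "card I = k" and below: "\<forall>i\<in>I. \<forall>j\<in>{..<N} - I. f i \<le> f j"
  define H where "H = {i. i < N \<and> f i \<le> \<tau>}"
  have sublevel: "{j\<in>{..<N}. f j \<le> c} = {i. i < N \<and> f i \<le> c}" for c by auto
  have "finite I" "I \<noteq> {}" using I \<open>1 \<le> k\<close> finite_subset by fastforce+
  show "H = {} \<or> sum f I / k \<le> sum f H / card H + \<epsilon> * (\<tau> + \<delta>)"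
  proof (cases "H = {}")
    case False
    consider "k \<le> card H" | "card H < k" by linarith
    then show ?thesis
    proof cases
      case 1
      then have "I \<subseteq> H"
        using smallest_subset_sublevel_set[of "{..<N}" I f \<tau>] I below by (simp add: sublevel H_def)
      then have "sum f I / k \<le> sum f H / card H"
        using mean_le_mean_of_superset[of H I f] I below \<open>I \<noteq> {}\<close> by (auto simp: H_def)
      then show ?thesis using \<open>0 \<le> \<epsilon>\<close> \<open>0 \<le> \<tau>\<close> \<open>0 \<le> \<delta>\<close> by (simp add: add_increasing2)
    next
      case 2
      have "H \<subseteq> I"
        using sublevel_set_subset_smallest[of "{..<N}" I f \<tau>] I below 2 by (simp add: sublevel H_def)
      moreover have "\<forall>i\<in>I. f i \<le> \<tau> + \<delta>"
        using smallest_subset_sublevel_set[of "{..<N}" I f "\<tau> + \<delta>"] I below enough_below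
        by (auto simp: sublevel)
      ultimately have "sum f I / k \<le> sum f H / card H + (1 - card H / k) * (\<tau> + \<delta>)"
        using mean_le_mean_of_subset_plus[of I H f "\<tau> + \<delta>"] \<open>finite I\<close> False I nonneg
        by (auto simp: H_def)
      also have "1 - card H / k \<le> \<epsilon>"
        using many_below \<open>1 \<le> k\<close> by (simp add: H_def field_simps)
      finally show ?thesis using \<open>0 \<le> \<tau>\<close> \<open>0 \<le> \<delta>\<close> by (simp add: mult_right_mono)
    qed
  qed simp
qed

text \<open>All quantifiers range over finite sets here, which the measurability prover can handle.\<close>
lemma smallest_mean_bound_finite_quantifiers:
  "smallest_mean_bound N k \<tau> e f \<longleftrightarrow>
     (\<forall>I\<in>Pow {..<N}. card I = k \<longrightarrow> (\<forall>i\<in>I. \<forall>j\<in>{..<N} - I. f i \<le> f j) \<longrightarrow>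
        (\<forall>J\<in>Pow {..<N}. (\<forall>i\<in>{..<N}. i \<in> J \<longleftrightarrow> f i \<le> \<tau>) \<longrightarrow>
           J = {} \<or> (\<Sum>i\<in>I. f i) / real k \<le> (\<Sum>i\<in>J. f i) / real (card J) + e))"
proof -
  have "(\<forall>i\<in>{..<N}. i \<in> J \<longleftrightarrow> f i \<le> \<tau>) \<longleftrightarrow> J = {i. i < N \<and> f i \<le> \<tau>}"
    if "J \<subseteq> {..<N}" for J using that by auto
  then show ?thesis unfolding smallest_mean_bound_def Let_def by auto
qed

lemma smallest_mean_bound_cong:
  assumes "\<And>i. i < N \<Longrightarrow> f i = g i"
  shows "smallest_mean_bound N k \<tau> e f \<longleftrightarrow> smallest_mean_bound N k \<tau> e g"
proof -
  have sum_eq: "sum f I = sum g I" if "I \<subseteq> {..<N}" for I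
    using that assms by (intro sum.cong) auto
  have order_eq: "(\<forall>i\<in>I. \<forall>j\<in>{..<N} - I. f i \<le> f j) \<longleftrightarrow> (\<forall>i\<in>I. \<forall>j\<in>{..<N} - I. g i \<le> g j)"
    if "I \<subseteq> {..<N}" for I
    using that assms by (auto simp: subset_iff)
  have sublevel_eq: "{i. i < N \<and> f i \<le> \<tau>} = {i. i < N \<and> g i \<le> \<tau>}"
    using assms by auto
  have "sum f {i. i < N \<and> g i \<le> \<tau>} = sum g {i. i < N \<and> g i \<le> \<tau>}"
    by (rule sum_eq) auto
  then show ?thesis
    unfolding smallest_mean_bound_def Let_def sublevel_eq by (simp add: sum_eq order_eq)
qed

lemma measurable_smallest_mean_bound:
  assumes "\<And>i. i < N \<Longrightarrow> X i \<in> borel_measurable M"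
  shows "{\<omega> \<in> space M. smallest_mean_bound N k \<tau> e (\<lambda>i. X i \<omega>)} \<in> sets M"
proof -
  \<comment> \<open>The measurability prover is only efficient with unconditional facts.\<close>
  define Y where "Y i = (if i < N then X i else (\<lambda>_. 0))" for i
  have [measurable]: "Y i \<in> borel_measurable M" for i
    using assms by (simp add: Y_def)
  have "{\<omega> \<in> space M. smallest_mean_bound N k \<tau> e (\<lambda>i. Y i \<omega>)} \<in> sets M"
    unfolding smallest_mean_bound_finite_quantifiers by measurable
  moreover have "smallest_mean_bound N k \<tau> e (\<lambda>i. Y i \<omega>) \<longleftrightarrow> smallest_mean_bound N k \<tau> e (\<lambda>i. X i \<omega>)"
    for \<omega> by (rule smallest_mean_bound_cong) (simp add: Y_def)
  ultimately show ?thesis by simp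
qed

lemma real_card_eq_sum_of_bool: "real (card {i. i < (N::nat) \<and> P i}) = (\<Sum>i<N. of_bool (P i))"
proof -
  have "(\<Sum>i<N. of_bool (P i)) = real (card ({..<N} \<inter> {i. P i}))"
    by (intro sum_of_bool_eq finite_lessThan)
  also have "{..<N} \<inter> {i. P i} = {i. i < N \<and> P i}" by auto
  finally show ?thesis ..
qed

lemma (in prob_space) prob_count_below_le:
  fixes X :: "nat \<Rightarrow> 'a \<Rightarrow> real"
  assumes indep: "indep_vars (\<lambda>_. borel) X {..<N}"
    and p: "\<And>i. i < N \<Longrightarrow> prob {\<omega> \<in> space M. X i \<omega> \<le> c} = p"
    and "0 < N" and "0 \<le> t"
  shows "prob {\<omega> \<in> space M. real (card {i. i < N \<and> X i \<omega> \<le> c}) \<le> N * p - t}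
           \<le> exp (-2 * t\<^sup>2 / N)"
proof -
  have rv: "X i \<in> borel_measurable M" if "i < N" for i
    using indep that by (auto simp: indep_vars_def)
  define Y where "Y i \<omega> = (of_bool (X i \<omega> \<le> c) :: real)" for i \<omega>
  interpret Hoeffding_ineq M "{..<N}" Y "\<lambda>_. 0" "\<lambda>_. 1" "\<Sum>i<N. expectation (Y i)"
  proof unfold_locales
    show "indep_vars (\<lambda>_. borel) Y {..<N}"
      unfolding Y_def by (rule indep_vars_compose2[OF indep]) auto
  qed (auto simp: Y_def)
  have "expectation (Y i) = p" if "i < N" for i
  proof -
    note [measurable] = rv[OF \<open>i < N\<close>]
    have "expectation (Y i) = expectation (indicator {\<omega> \<in> space M. X i \<omega> \<le> c})"
      by (intro Bochner_Integration.integral_cong) (auto simp: Y_def)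
    then show ?thesis using p[OF \<open>i < N\<close>] by simp
  qed
  then have "(\<Sum>i<N. expectation (Y i)) = N * p" by simp
  moreover have "real (card {i. i < N \<and> X i \<omega> \<le> c}) = (\<Sum>i<N. Y i \<omega>)" for \<omega>
    by (simp add: Y_def real_card_eq_sum_of_bool)
  ultimately have "prob {\<omega> \<in> space M. real (card {i. i < N \<and> X i \<omega> \<le> c}) \<le> N * p - t}
      = prob {\<omega> \<in> space M. (\<Sum>i<N. Y i \<omega>) \<le> (\<Sum>i<N. expectation (Y i)) - t}"
    by simp
  also have "\<dots> \<le> exp (-2 * t\<^sup>2 / (\<Sum>i<N. (1 - 0)\<^sup>2))"
    using \<open>0 < N\<close> \<open>0 \<le> t\<close> by (intro Hoeffding_ineq_le) auto
  finally show ?thesis by simp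
qed

lemma (in prob_space) prob_ge_one_minus_union_bound:
  assumes "T \<in> events" "A \<in> events" "B \<in> events" "C \<in> events"
    and "space M - (A \<union> B \<union> C) \<subseteq> T"
  shows "1 - prob A - prob B - prob C \<le> prob T"
proof -
  have "prob (A \<union> B \<union> C) \<le> prob A + prob B + prob C"
    using assms measure_subadditive[of A M B] measure_subadditive[of "A \<union> B" M C]
    by auto
  moreover have "prob (space M - (A \<union> B \<union> C)) = 1 - prob (A \<union> B \<union> C)"
    using assms by (intro prob_compl) auto
  moreover have "prob (space M - (A \<union> B \<union> C)) \<le> prob T"
    using assms by (intro finite_measure_mono) auto
  ultimately show ?thesis by linarith
qed

lemma (in prob_space) prob_smallest_mean_bound:
  fixes X :: "nat \<Rightarrow> 'a \<Rightarrow> real"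
  assumes indep: "indep_vars (\<lambda>_. borel) X {..<N}"
    and null: "\<And>i. i < N \<Longrightarrow> prob {\<omega> \<in> space M. X i \<omega> \<le> 0} = 0"
    and p: "\<And>i. i < N \<Longrightarrow> prob {\<omega> \<in> space M. X i \<omega> \<le> \<tau>} = p"
    and q: "\<And>i. i < N \<Longrightarrow> prob {\<omega> \<in> space M. X i \<omega> \<le> \<tau> + \<delta>} = q"
    and "1 \<le> k" "0 \<le> \<epsilon>" "0 \<le> \<tau>" "0 \<le> \<delta>"
    and "(1 - \<epsilon>) * k \<le> N * p" "k \<le> N * q"
  shows "1 - exp (-2 * (N * p - (1 - \<epsilon>) * k)\<^sup>2 / N) - exp (-2 * (N * q - k)\<^sup>2 / N)
           \<le> prob {\<omega> \<in> space M. smallest_mean_bound N k \<tau> (\<epsilon> * (\<tau> + \<delta>)) (\<lambda>i. X i \<omega>)}"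
proof -
  have [measurable]: "X i \<in> borel_measurable M" if "i \<in> {..<N}" for i
    using indep that by (auto simp: indep_vars_def)
  have "0 < N" using \<open>1 \<le> k\<close> \<open>k \<le> N * q\<close> by (cases N) auto
  define B0 where "B0 = (\<Union>i<N. {\<omega> \<in> space M. X i \<omega> \<le> 0})"
  define B1 where "B1 = {\<omega> \<in> space M. real (card {i. i < N \<and> X i \<omega> \<le> \<tau>}) \<le> (1 - \<epsilon>) * k}"
  define B2 where "B2 = {\<omega> \<in> space M. real (card {i. i < N \<and> X i \<omega> \<le> \<tau> + \<delta>}) \<le> k}"
  have events: "B0 \<in> events" "B1 \<in> events" "B2 \<in> events"
    unfolding B0_def B1_def B2_def real_card_eq_sum_of_bool by measurable
  have "prob B0 \<le> (\<Sum>i<N. prob {\<omega> \<in> space M. X i \<omega> \<le> 0})"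
    unfolding B0_def by (intro finite_measure_subadditive_finite) auto
  then have "prob B0 = 0" using null by (simp add: measure_le_0_iff)
  moreover have "prob B1 \<le> exp (-2 * (N * p - (1 - \<epsilon>) * k)\<^sup>2 / N)"
    using prob_count_below_le[OF indep p \<open>0 < N\<close>, of "N * p - (1 - \<epsilon>) * k"] assms
    by (simp add: B1_def)
  moreover have "prob B2 \<le> exp (-2 * (N * q - k)\<^sup>2 / N)"
    using prob_count_below_le[OF indep q \<open>0 < N\<close>, of "N * q - k"] assms
    by (simp add: B2_def)
  moreover have "space M - (B0 \<union> B1 \<union> B2)
      \<subseteq> {\<omega> \<in> space M. smallest_mean_bound N k \<tau> (\<epsilon> * (\<tau> + \<delta>)) (\<lambda>i. X i \<omega>)}"
  proof safe
    fix \<omega> assume "\<omega> \<in> space M" "\<omega> \<notin> B0" "\<omega> \<notin> B1" "\<omega> \<notin> B2"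
    then have "\<forall>i<N. 0 \<le> X i \<omega>"
      and "real k - \<epsilon> * real k < card {i. i < N \<and> X i \<omega> \<le> \<tau>}"
      and "k \<le> card {i. i < N \<and> X i \<omega> \<le> \<tau> + \<delta>}"
      by (auto simp: B0_def B1_def B2_def algebra_simps not_le intro: less_imp_le)
    then show "smallest_mean_bound N k \<tau> (\<epsilon> * (\<tau> + \<delta>)) (\<lambda>i. X i \<omega>)"
      using assms by (intro smallest_mean_boundI) auto
  qed
  moreover have "{\<omega> \<in> space M. smallest_mean_bound N k \<tau> (\<epsilon> * (\<tau> + \<delta>)) (\<lambda>i. X i \<omega>)} \<in> events"
    using indep by (intro measurable_smallest_mean_bound) (auto simp: indep_vars_def)
  ultimately show ?thesis
    using prob_ge_one_minus_union_bound[OF _ events] by fastforce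
qed

lemma delta_sq_exp_le:
  fixes \<delta> :: real
  assumes "0 \<le> \<delta>"
  shows "\<delta>\<^sup>2 * exp (- \<delta>) \<le> 4 * (1 - exp (- \<delta> / 2))\<^sup>2"
proof -
  define a where "a = exp (- \<delta> / 2)"
  have "a * (1 + \<delta> / 2) \<le> a * exp (\<delta> / 2)"
    by (simp add: a_def exp_ge_add_one_self)
  also have "a * exp (\<delta> / 2) = 1" by (simp add: a_def flip: exp_add)
  finally have "\<delta> / 2 * a \<le> 1 - a" by (simp add: algebra_simps)
  then have "(\<delta> / 2 * a)\<^sup>2 \<le> (1 - a)\<^sup>2"
    using \<open>0 \<le> \<delta>\<close> by (intro power_mono) (auto simp: a_def)
  moreover have "exp (- \<delta>) = a\<^sup>2" by (simp add: a_def flip: exp_of_nat_mult)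
  ultimately show ?thesis by (simp add: a_def power_mult_distrib power_divide)
qed

lemma Hoeffding_exponents_le:
  fixes N k \<epsilon> \<delta> :: real
  assumes "0 < k" "k < N" "0 \<le> \<delta>"
  shows "exp (-2 * (N * (k / N) - (1 - \<epsilon>) * k)\<^sup>2 / N)
           + exp (-2 * (N * (1 - (1 - k / N) * exp (- \<delta> / 2)) - k)\<^sup>2 / N)
         \<le> 2 * exp (- (1/2) * \<delta>^2 * exp (- \<delta>) * (1 - k / N)^2 * N)
           + 2 * exp (- 2 * \<epsilon>^2 * (1 - k / N)^2 * k^2 / N)"
proof -
  define \<sigma> where "\<sigma> = k / N"
  define a where "a = exp (- \<delta> / 2)"
  have "0 < N" and \<sigma>: "0 < \<sigma>" "\<sigma> < 1" "N * \<sigma> = k"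
    using assms by (auto simp: \<sigma>_def field_simps)
  have "exp (-2 * (N * \<sigma> - (1 - \<epsilon>) * k)\<^sup>2 / N) \<le> 2 * exp (- 2 * \<epsilon>^2 * (1 - \<sigma>)^2 * k^2 / N)"
  proof -
    have "N * \<sigma> - (1 - \<epsilon>) * k = \<epsilon> * k" using \<sigma> by (simp add: algebra_simps)
    then have "exp (-2 * (N * \<sigma> - (1 - \<epsilon>) * k)\<^sup>2 / N) = exp (- (2 * (\<epsilon> * k)\<^sup>2 / N))" by simp
    also have "\<dots> \<le> exp (- (2 * ((\<epsilon> * k)\<^sup>2 * (1 - \<sigma>)\<^sup>2) / N))"
    proof -
      have "(\<epsilon> * k)\<^sup>2 * (1 - \<sigma>)\<^sup>2 \<le> (\<epsilon> * k)\<^sup>2"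
        using \<sigma> by (intro mult_left_le) (auto simp: power_le_one)
      then show ?thesis using \<open>0 < N\<close> by (simp add: divide_right_mono)
    qed
    also have "\<dots> = exp (- 2 * \<epsilon>^2 * (1 - \<sigma>)^2 * k^2 / N)"
      by (simp add: power_mult_distrib mult_ac)
    also have "\<dots> \<le> 2 * \<dots>" by simp
    finally show ?thesis .
  qed
  moreover have "exp (-2 * (N * (1 - (1 - \<sigma>) * a) - k)\<^sup>2 / N)
      \<le> 2 * exp (- (1/2) * \<delta>^2 * exp (- \<delta>) * (1 - \<sigma>)^2 * N)"
  proof -
    define c where "c = (1 - \<sigma>)\<^sup>2 * N"
    have "0 \<le> c" using \<open>0 < N\<close> by (simp add: c_def)
    have slack: "N * (1 - (1 - \<sigma>) * a) - k = N * (1 - \<sigma>) * (1 - a)"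
      using \<sigma> by (simp add: algebra_simps)
    have "exp (-2 * (N * (1 - (1 - \<sigma>) * a) - k)\<^sup>2 / N) = exp (- (1/2) * (4 * (1 - a)\<^sup>2 * c))"
      unfolding slack using \<open>0 < N\<close> by (simp add: c_def power2_eq_square field_simps)
    also have "\<dots> \<le> exp (- (1/2) * (\<delta>\<^sup>2 * exp (- \<delta>) * c))"
      using mult_right_mono[OF delta_sq_exp_le[OF \<open>0 \<le> \<delta>\<close>] \<open>0 \<le> c\<close>] by (simp add: a_def mult_ac)
    also have "\<dots> = exp (- (1/2) * \<delta>^2 * exp (- \<delta>) * (1 - \<sigma>)^2 * N)"
      by (simp add: c_def mult_ac)
    also have "\<dots> \<le> 2 * \<dots>" by simp
    finally show ?thesis .
  qed
  ultimately show ?thesis unfolding \<sigma>_def a_def by linarith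
qed

theorem propositionA4:
  fixes M :: "'a measure" and X :: "nat \<Rightarrow> 'a \<Rightarrow> real"
    and N k :: nat and \<epsilon> \<delta> :: real
  assumes "prob_space M"
    and rv: "\<And>i. i < N \<Longrightarrow> X i \<in> borel_measurable M"
    and indep: "prob_space.indep_vars M (\<lambda>_. borel) X {..<N}"
    and cdf: "\<And>i t. i < N \<Longrightarrow> t \<ge> 0 \<Longrightarrow>
               measure M {\<omega> \<in> space M. X i \<omega> \<le> t} = 1 - exp (- t / 2)"
    and k: "1 \<le> k" "k < N"
    and eps: "\<epsilon> > 0" and del: "\<delta> > 0"
  shows
    "(let \<sigma> = real k / real N;
          \<tau> = - 2 * ln (1 - \<sigma>)
      in measure M {\<omega> \<in> space M.
            \<forall>I. I \<subseteq> {..<N} \<longrightarrow> card I = k \<longrightarrow>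
                (\<forall>i\<in>I. \<forall>j\<in>{..<N} - I. X i \<omega> \<le> X j \<omega>) \<longrightarrow>
                (let Ih = {i. i < N \<and> X i \<omega> \<le> \<tau>}
                 in Ih = {} \<or>
                    (\<Sum>i\<in>I. X i \<omega>) / real k
                      \<le> (\<Sum>i\<in>Ih. X i \<omega>) / real (card Ih) + \<epsilon> * (\<tau> + \<delta>))}
         \<ge> 1 - 2 * exp (- (1/2) * \<delta>^2 * exp (- \<delta>) * (1 - \<sigma>)^2 * real N)
              - 2 * exp (- 2 * \<epsilon>^2 * (1 - \<sigma>)^2 * (real k)^2 / real N))"
proof -
  interpret prob_space M by fact
  define \<sigma> where "\<sigma> = real k / real N"
  define \<tau> where "\<tau> = - 2 * ln (1 - \<sigma>)"
  define a where "a = exp (- \<delta> / 2)"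
  have \<sigma>: "0 < \<sigma>" "\<sigma> < 1" "real N * \<sigma> = k"
    using k by (auto simp: \<sigma>_def field_simps)
  have exp_\<tau>: "exp (- \<tau> / 2) = 1 - \<sigma>" and "0 \<le> \<tau>"
    using \<sigma> by (auto simp: \<tau>_def)
  have "exp (- (\<tau> + \<delta>) / 2) = exp (- \<tau> / 2) * a"
    unfolding a_def exp_add[symmetric] by (rule arg_cong[where f = exp]) (simp add: field_simps)
  then have prob_\<tau>: "prob {\<omega> \<in> space M. X i \<omega> \<le> \<tau>} = \<sigma>"
    and prob_\<tau>\<delta>: "prob {\<omega> \<in> space M. X i \<omega> \<le> \<tau> + \<delta>} = 1 - (1 - \<sigma>) * a" if "i < N" for i
    using cdf[OF that, of \<tau>] cdf[OF that, of "\<tau> + \<delta>"] exp_\<tau> \<open>0 \<le> \<tau>\<close> del by auto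
  have "N * (1 - (1 - \<sigma>) * a) - k = N * (1 - \<sigma>) * (1 - a)"
    using \<sigma> by (simp add: algebra_simps)
  moreover have "0 \<le> N * (1 - \<sigma>) * (1 - a)"
    using \<sigma> del by (simp add: a_def)
  ultimately have "1 - exp (-2 * (N * \<sigma> - (1 - \<epsilon>) * k)\<^sup>2 / N)
        - exp (-2 * (N * (1 - (1 - \<sigma>) * a) - k)\<^sup>2 / N)
      \<le> prob {\<omega> \<in> space M. smallest_mean_bound N k \<tau> (\<epsilon> * (\<tau> + \<delta>)) (\<lambda>i. X i \<omega>)}"
    using k eps del \<sigma> \<open>0 \<le> \<tau>\<close> cdf[of _ 0]
    by (intro prob_smallest_mean_bound[OF indep _ prob_\<tau> prob_\<tau>\<delta>]) auto
  then show ?thesis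
    using Hoeffding_exponents_le[of k N \<delta> \<epsilon>] k del
    unfolding Let_def \<tau>_def \<sigma>_def a_def smallest_mean_bound_def by linarith
qed

end
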